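(* Let $\varepsilon<\varepsilon_0=1/21$ and let $B\subset\mathbb{Z}^2$ be an $\varepsilon$-rare random set. Then almost surely $\mathbb{Z}^2\setminus B$ has a unique infinite $\square$-connected component $I$, and every $\boxtimes$-connected component of $\mathbb{Z}^2\setminus I$ is finite.
   Context: $\square$-adjacency on $\mathbb{Z}^2$: $\|u-v\|_1=1$; $\boxtimes$-adjacency: $\|u-v\|_\infty=1$. A random set $B\subset\mathbb{Z}^2$ (defined on a probability space with measure $\mathbb{P}$) is $\varepsilon$-rare ($\varepsilon\ge0$) if $\mathbb{P}(A\subset B)\le\varepsilon^{\#A}$ for every finite $A\subset\mathbb{Z}^2$. *)

theory Defs
  imports "HOL-Probability.Probability"
begin

type_synonym site = "int \<times> int"

definition sq_adj :: "site \<Rightarrow> site \<Rightarrow> bool" where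
  "sq_adj u v \<longleftrightarrow> \<bar>fst u - fst v\<bar> + \<bar>snd u - snd v\<bar> = 1"

definition box_adj :: "site \<Rightarrow> site \<Rightarrow> bool" where
  "box_adj u v \<longleftrightarrow> max \<bar>fst u - fst v\<bar> \<bar>snd u - snd v\<bar> = 1"

definition adj_in :: "(site \<Rightarrow> site \<Rightarrow> bool) \<Rightarrow> site set \<Rightarrow> site \<Rightarrow> site \<Rightarrow> bool" where
  "adj_in adj S u v \<longleftrightarrow> u \<in> S \<and> v \<in> S \<and> adj u v"

text \<open>The adj-connected component of x inside S (x assumed in S).\<close>
definition comp_of :: "(site \<Rightarrow> site \<Rightarrow> bool) \<Rightarrow> site set \<Rightarrow> site \<Rightarrow> site set" where
  "comp_of adj S x = {y. (adj_in adj S)\<^sup>*\<^sup>* x y}"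

definition components_of :: "(site \<Rightarrow> site \<Rightarrow> bool) \<Rightarrow> site set \<Rightarrow> site set set" where
  "components_of adj S = comp_of adj S ` S"

definition rare :: "'a measure \<Rightarrow> ('a \<Rightarrow> site set) \<Rightarrow> real \<Rightarrow> bool" where
  "rare M B \<epsilon> \<longleftrightarrow> 0 \<le> \<epsilon> \<and>
     (\<forall>A. finite A \<longrightarrow> measure M {\<omega> \<in> space M. A \<subseteq> B \<omega>} \<le> \<epsilon> ^ card A)"

end

theory Submission
  imports Defs
begin

text \<open>
  Call the king-connected components of \<open>B\<close> its clusters, and fill a cluster by adding the finite
  square components of its complement. Fillings of two clusters are nested or disjoint, and
  king-adjacent fillings meet, so a king path through filled sites stays inside one filling.
  A first-moment bound over self-avoiding king walks and Borel-Cantelli show that almost surely,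
  for all large \<open>n\<close>, no cluster starting in the box of radius \<open>4 n\<close> reaches distance \<open>n\<close>.
  Then a filling cannot contain two points whose distance is large compared to their distance
  from the origin; hence unfilled sites exist arbitrarily far out and king components of filled
  sites are finite. Unfilled sites are square-connected in the complement of \<open>B\<close>: each of the
  finitely many nearby clusters leaves them in its unique infinite hole, and Janiszewski's theorem,
  applied to unions of unit tiles, shows that obstacles at king distance at least 2 from each other
  cannot jointly separate what none of them separates. So the component of the unfilled sites is
  the unique infinite one, and everything outside it is filled.
\<close>


section \<open>Connected components in a graph on the lattice\<close>

lemma comp_of_iff: "y \<in> comp_of adj S x \<longleftrightarrow> (adj_in adj S)\<^sup>*\<^sup>* x y"
  unfolding comp_of_def by simp

lemma comp_of_self [simp]: "x \<in> comp_of adj S x"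
  unfolding comp_of_def by simp

lemma rtranclp_adj_in_target: "(adj_in adj S)\<^sup>*\<^sup>* x y \<Longrightarrow> y = x \<or> y \<in> S"
  by (induction rule: rtranclp.induct) (auto simp: adj_in_def)

lemma comp_of_subset: "x \<in> S \<Longrightarrow> comp_of adj S x \<subseteq> S"
  using rtranclp_adj_in_target unfolding comp_of_def by blast

lemma symp_adj_in: "symp adj \<Longrightarrow> symp (adj_in adj S)"
  unfolding adj_in_def symp_def by blast

lemma rtranclp_adj_in_sym:
  "symp adj \<Longrightarrow> (adj_in adj S)\<^sup>*\<^sup>* x y \<Longrightarrow> (adj_in adj S)\<^sup>*\<^sup>* y x"
  using symp_rtranclp[OF symp_adj_in] by (blast dest: sympD)

lemma comp_of_eq:
  assumes "symp adj" "y \<in> comp_of adj S x"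
  shows "comp_of adj S y = comp_of adj S x"
proof -
  have "(adj_in adj S)\<^sup>*\<^sup>* x y" "(adj_in adj S)\<^sup>*\<^sup>* y x"
    using assms rtranclp_adj_in_sym by (auto simp: comp_of_iff)
  then show ?thesis
    unfolding comp_of_def by (auto intro: rtranclp_trans)
qed

lemma comp_of_step:
  "y \<in> comp_of adj S x \<Longrightarrow> y \<in> S \<Longrightarrow> z \<in> S \<Longrightarrow> adj y z \<Longrightarrow> z \<in> comp_of adj S x"
  unfolding comp_of_def adj_in_def by (auto intro: rtranclp.rtrancl_into_rtrancl)

lemma rtranclp_adj_in_mono:
  assumes "(adj_in adj S)\<^sup>*\<^sup>* x y" "S \<subseteq> T" "\<And>u v. adj u v \<Longrightarrow> adj' u v"
  shows "(adj_in adj' T)\<^sup>*\<^sup>* x y"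
proof -
  have "adj_in adj S \<le> adj_in adj' T"
    using assms(2,3) unfolding adj_in_def by auto
  then show ?thesis
    using assms(1) rtranclp_mono by blast
qed

lemma comp_of_mono: "S \<subseteq> T \<Longrightarrow> comp_of adj S x \<subseteq> comp_of adj T x"
  unfolding comp_of_def using rtranclp_adj_in_mono by blast

lemma comp_of_restrict:
  assumes "x \<in> T" "comp_of adj S x \<subseteq> T"
  shows "comp_of adj S x \<subseteq> comp_of adj (S \<inter> T) x"
proof
  fix y assume "y \<in> comp_of adj S x"
  then have "(adj_in adj S)\<^sup>*\<^sup>* x y"
    by (simp add: comp_of_iff)
  then show "y \<in> comp_of adj (S \<inter> T) x"
  proof (induction rule: rtranclp_induct)
    case base
    show ?case by simp
  next
    case (step b c)
    have "b \<in> T" "c \<in> T"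
      using assms(2) step(1,2) by (auto simp: comp_of_iff intro: rtranclp.rtrancl_into_rtrancl)
    moreover have "b \<in> S" "c \<in> S" "adj b c"
      using step(2) by (auto simp: adj_in_def)
    ultimately show ?case
      using comp_of_step[OF step(3)] by auto
  qed
qed

lemma rtranclp_adj_in_int_path:
  fixes f :: "int \<Rightarrow> site"
  assumes "symp adj" "\<And>i. adj (f i) (f (i + 1))"
    and "\<And>i. min a b \<le> i \<Longrightarrow> i \<le> max a b \<Longrightarrow> f i \<in> S"
  shows "(adj_in adj S)\<^sup>*\<^sup>* (f a) (f b)"
proof -
  have forward: "(adj_in adj S)\<^sup>*\<^sup>* (f a) (f (a + int k))"
    if "\<And>i. a \<le> i \<Longrightarrow> i \<le> a + int k \<Longrightarrow> f i \<in> S" for a k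
    using that
  proof (induction k)
    case 0
    show ?case by simp
  next
    case (Suc k)
    have "adj_in adj S (f (a + int k)) (f (a + int (Suc k)))"
      using Suc.prems assms(2)[of "a + int k"] unfolding adj_in_def by (auto simp: algebra_simps)
    moreover have "(adj_in adj S)\<^sup>*\<^sup>* (f a) (f (a + int k))"
      using Suc by simp
    ultimately show ?case
      by (rule rtranclp.rtrancl_into_rtrancl[rotated])
  qed
  show ?thesis
  proof (cases "a \<le> b")
    case True
    then show ?thesis
      using forward[of a "nat (b - a)"] assms(3) by simp
  next
    case False
    then have "(adj_in adj S)\<^sup>*\<^sup>* (f b) (f a)"
      using forward[of b "nat (a - b)"] assms(3) by simp
    then show ?thesis
      using assms(1) rtranclp_adj_in_sym by blast
  qed
qed

lemma rtranclp_adj_in_intermediate_value: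
  assumes "(adj_in adj X)\<^sup>*\<^sup>* u w" "\<And>a b. adj a b \<Longrightarrow> \<bar>f a - f b\<bar> \<le> (1::int)"
    and "min (f u) (f w) \<le> t" "t \<le> max (f u) (f w)"
  shows "\<exists>v. (adj_in adj X)\<^sup>*\<^sup>* u v \<and> f v = t"
  using assms(1,3,4)
proof (induction rule: rtranclp_induct)
  case base
  then show ?case
    by (intro exI[of _ u]) auto
next
  case (step b z)
  show ?case
  proof (cases "min (f u) (f b) \<le> t \<and> t \<le> max (f u) (f b)")
    case True
    then show ?thesis
      using step(3) by blast
  next
    case False
    have "\<bar>f b - f z\<bar> \<le> 1"
      using step(2) assms(2) unfolding adj_in_def by blast
    then have "t = f z"
      using False step(4,5) by arith
    then show ?thesis
      using step(1,2) by (blast intro: rtranclp.rtrancl_into_rtrancl)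
  qed
qed


section \<open>Geometry of the square lattice\<close>

definition norm_inf :: "site \<Rightarrow> int" where
  "norm_inf u = max \<bar>fst u\<bar> \<bar>snd u\<bar>"

definition dist_inf :: "site \<Rightarrow> site \<Rightarrow> int" where
  "dist_inf u v = max \<bar>fst u - fst v\<bar> \<bar>snd u - snd v\<bar>"

lemma symp_sq_adj: "symp sq_adj"
  unfolding symp_def sq_adj_def by linarith

lemma symp_box_adj: "symp box_adj"
  unfolding symp_def box_adj_def by linarith

lemma sq_adj_imp_box_adj: "sq_adj u v \<Longrightarrow> box_adj u v"
  unfolding sq_adj_def box_adj_def by auto

lemma box_adj_iff_dist_inf: "box_adj u v \<longleftrightarrow> dist_inf u v = 1"
  unfolding box_adj_def dist_inf_def ..

lemma box_adj_cases:
  "box_adj u v \<Longrightarrow> sq_adj u v \<or> (sq_adj u (fst v, snd u) \<and> sq_adj (fst v, snd u) v)"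
  unfolding sq_adj_def box_adj_def by auto

lemma dist_inf_commute: "dist_inf u v = dist_inf v u"
  unfolding dist_inf_def by (simp add: abs_minus_commute)

lemma dist_inf_triangle: "dist_inf u w \<le> dist_inf u v + dist_inf v w"
  unfolding dist_inf_def by arith

lemma norm_inf_le_dist_inf: "norm_inf v \<le> norm_inf u + dist_inf u v"
  unfolding norm_inf_def dist_inf_def by arith

lemma norm_inf_nonneg: "norm_inf u \<ge> 0"
  unfolding norm_inf_def by simp

lemma sq_adj_norm_inf: "sq_adj u v \<Longrightarrow> \<bar>norm_inf u - norm_inf v\<bar> \<le> 1"
  unfolding sq_adj_def norm_inf_def by arith

lemma finite_norm_inf_le: "finite {z. norm_inf z \<le> N}"
proof -
  have "{z. norm_inf z \<le> N} \<subseteq> {-N..N} \<times> {-N..N}"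
    by (auto simp: norm_inf_def)
  then show ?thesis
    by (rule finite_subset) auto
qed

lemma finite_imp_norm_inf_bounded: "finite A \<Longrightarrow> \<exists>N. \<forall>z\<in>A. norm_inf z \<le> N"
  by (rule exI[of _ "Max (norm_inf ` A)"]) auto

lemma infinite_imp_dist_inf_unbounded:
  assumes "infinite A"
  shows "\<exists>z\<in>A. dist_inf z c > N"
proof (rule ccontr)
  assume far: "\<not> ?thesis"
  have "A \<subseteq> {z. norm_inf z \<le> N + norm_inf c}"
  proof
    fix z assume "z \<in> A"
    then have "dist_inf c z \<le> N"
      using far dist_inf_commute[of c z] by auto
    then show "z \<in> {z. norm_inf z \<le> N + norm_inf c}"
      using norm_inf_le_dist_inf[of z c] by simp
  qed
  then show False
    using assms finite_norm_inf_le finite_subset by blast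
qed

lemma rtranclp_sq_adj_row:
  "(\<And>x. min a b \<le> x \<Longrightarrow> x \<le> max a b \<Longrightarrow> (x, y) \<in> S) \<Longrightarrow> (adj_in sq_adj S)\<^sup>*\<^sup>* (a, y) (b, y)"
  using rtranclp_adj_in_int_path[OF symp_sq_adj, of "\<lambda>x. (x, y)"] by (simp add: sq_adj_def)

lemma rtranclp_sq_adj_column:
  "(\<And>y. min a b \<le> y \<Longrightarrow> y \<le> max a b \<Longrightarrow> (x, y) \<in> S) \<Longrightarrow> (adj_in sq_adj S)\<^sup>*\<^sup>* (x, a) (x, b)"
  using rtranclp_adj_in_int_path[OF symp_sq_adj, of "\<lambda>y. (x, y)"] by (simp add: sq_adj_def)

lemma rtranclp_sq_adj_in_ball:
  assumes "norm_inf p \<le> N" "norm_inf q \<le> N"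
  shows "(adj_in sq_adj {z. norm_inf z \<le> N})\<^sup>*\<^sup>* p q"
proof -
  obtain a b c d where pq: "p = (a, b)" "q = (c, d)"
    by force
  have "(adj_in sq_adj {z. norm_inf z \<le> N})\<^sup>*\<^sup>* (a, b) (c, b)"
    by (rule rtranclp_sq_adj_row) (use assms pq in \<open>auto simp: norm_inf_def\<close>)
  moreover have "(adj_in sq_adj {z. norm_inf z \<le> N})\<^sup>*\<^sup>* (c, b) (c, d)"
    by (rule rtranclp_sq_adj_column) (use assms pq in \<open>auto simp: norm_inf_def\<close>)
  ultimately show ?thesis
    using pq by (auto intro: rtranclp_trans)
qed

lemma rtranclp_sq_adj_outside_ball_corner:
  assumes "norm_inf p > m" "m \<ge> 0"
  shows "(adj_in sq_adj {z. norm_inf z > m})\<^sup>*\<^sup>* p (m + 1, m + 1)"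
proof -
  let ?S = "{z. norm_inf z > m}"
  obtain a b where p: "p = (a, b)"
    by force
  have "\<bar>b\<bar> > m \<or> \<bar>a\<bar> > m"
    using assms by (auto simp: norm_inf_def p less_max_iff_disj)
  then show ?thesis
  proof
    assume b: "\<bar>b\<bar> > m"
    have "(adj_in sq_adj ?S)\<^sup>*\<^sup>* (a, b) (m + 1, b)"
      by (rule rtranclp_sq_adj_row) (use b in \<open>auto simp: norm_inf_def\<close>)
    moreover have "(adj_in sq_adj ?S)\<^sup>*\<^sup>* (m + 1, b) (m + 1, m + 1)"
      by (rule rtranclp_sq_adj_column) (use assms(2) in \<open>auto simp: norm_inf_def\<close>)
    ultimately show ?thesis
      using p by (auto intro: rtranclp_trans)
  next
    assume a: "\<bar>a\<bar> > m"
    have "(adj_in sq_adj ?S)\<^sup>*\<^sup>* (a, b) (a, m + 1)"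
      by (rule rtranclp_sq_adj_column) (use a in \<open>auto simp: norm_inf_def\<close>)
    moreover have "(adj_in sq_adj ?S)\<^sup>*\<^sup>* (a, m + 1) (m + 1, m + 1)"
      by (rule rtranclp_sq_adj_row) (use assms(2) in \<open>auto simp: norm_inf_def\<close>)
    ultimately show ?thesis
      using p by (auto intro: rtranclp_trans)
  qed
qed

lemma rtranclp_sq_adj_outside_ball:
  assumes "norm_inf p > m" "norm_inf q > m" "m \<ge> 0"
  shows "(adj_in sq_adj {z. norm_inf z > m})\<^sup>*\<^sup>* p q"
proof -
  have "(adj_in sq_adj {z. norm_inf z > m})\<^sup>*\<^sup>* (m + 1, m + 1) q"
    using rtranclp_sq_adj_outside_ball_corner[OF assms(2,3)] rtranclp_adj_in_sym[OF symp_sq_adj]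
    by blast
  then show ?thesis
    using rtranclp_sq_adj_outside_ball_corner[OF assms(1,3)] by (rule rtranclp_trans[rotated])
qed

lemma infinite_sq_comp_unique:
  assumes "finite C" "infinite (comp_of sq_adj (- C) x)" "infinite (comp_of sq_adj (- C) y)"
  shows "comp_of sq_adj (- C) y = comp_of sq_adj (- C) x"
proof -
  obtain m where m: "\<forall>c\<in>C. norm_inf c \<le> m" "m \<ge> 0"
    using finite_imp_norm_inf_bounded[OF assms(1)] by (meson max.cobounded1 max.cobounded2 order_trans)
  have far: "\<exists>z\<in>A. norm_inf z > m" if inf: "infinite A" for A
  proof -
    obtain z where "z \<in> A" "dist_inf z (0, 0) > m"
      using infinite_imp_dist_inf_unbounded[OF inf] by blast
    moreover have "dist_inf z (0, 0) = norm_inf z"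
      unfolding dist_inf_def norm_inf_def by simp
    ultimately show ?thesis by auto
  qed
  obtain x' y' where x': "x' \<in> comp_of sq_adj (- C) x" "norm_inf x' > m"
    and y': "y' \<in> comp_of sq_adj (- C) y" "norm_inf y' > m"
    using far[OF assms(2)] far[OF assms(3)] by blast
  have "{z. norm_inf z > m} \<subseteq> - C"
    using m by force
  then have "y' \<in> comp_of sq_adj (- C) x'"
    using rtranclp_sq_adj_outside_ball[OF x'(2) y'(2) m(2)] comp_of_mono
    unfolding comp_of_iff[symmetric] by blast
  then show ?thesis
    using x'(1) y'(1) comp_of_eq[OF symp_sq_adj] by metis
qed


section \<open>Filling in the finite holes of a set\<close>

definition fill :: "site set \<Rightarrow> site set" where
  "fill C = C \<union> {y. y \<notin> C \<and> finite (comp_of sq_adj (- C) y)}"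

lemma fill_iff: "y \<in> fill C \<longleftrightarrow> y \<in> C \<or> finite (comp_of sq_adj (- C) y)"
  unfolding fill_def by auto

lemma fill_step:
  assumes "y \<in> fill C" "y \<notin> C" "z \<notin> C" "sq_adj y z"
  shows "z \<in> fill C"
proof -
  have "z \<in> comp_of sq_adj (- C) y"
    using comp_of_step[OF comp_of_self] assms(2-4) by auto
  then show ?thesis
    using assms(1,2) comp_of_eq[OF symp_sq_adj] unfolding fill_iff by metis
qed

definition ray :: "site \<Rightarrow> site \<Rightarrow> nat \<Rightarrow> site" where
  "ray p d t = (fst p + int t * fst d, snd p + int t * snd d)"

lemma sq_adj_ray_Suc: "\<bar>fst d\<bar> + \<bar>snd d\<bar> = 1 \<Longrightarrow> sq_adj (ray p d t) (ray p d (Suc t))"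
  unfolding ray_def sq_adj_def by (simp add: algebra_simps)

lemma inj_ray: "\<bar>fst d\<bar> + \<bar>snd d\<bar> = 1 \<Longrightarrow> inj (ray p d)"
  unfolding ray_def inj_def by (cases "fst d = 0") auto

lemma ray_first_hit:
  assumes d: "\<bar>fst d\<bar> + \<bar>snd d\<bar> = 1" and p: "p \<notin> C"
    and fin: "finite (comp_of sq_adj (- C) p)"
  shows "\<exists>t. ray p d t \<in> C \<and> (\<forall>s<t. ray p d s \<in> comp_of sq_adj (- C) p)"
proof -
  have "\<exists>t. ray p d t \<in> C"
  proof (rule ccontr)
    assume miss: "\<not> ?thesis"
    have "ray p d t \<in> comp_of sq_adj (- C) p" for t
    proof (induction t)
      case 0
      show ?case by (simp add: ray_def)
    next
      case (Suc t)
      show ?case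
        using miss comp_of_step[OF Suc _ _ sq_adj_ray_Suc[OF d]] by blast
    qed
    then have "range (ray p d) \<subseteq> comp_of sq_adj (- C) p"
      by blast
    then show False
      using fin inj_ray[OF d] range_inj_infinite finite_subset by blast
  qed
  then obtain t where t: "ray p d t \<in> C" "\<forall>s<t. ray p d s \<notin> C"
    using exists_least_iff[of "\<lambda>t. ray p d t \<in> C"] by blast
  have "s < t \<longrightarrow> ray p d s \<in> comp_of sq_adj (- C) p" for s
  proof (induction s)
    case 0
    show ?case by (simp add: ray_def)
  next
    case (Suc s)
    show ?case
    proof
      assume "Suc s < t"
      then have "ray p d s \<in> comp_of sq_adj (- C) p" "ray p d s \<in> - C" "ray p d (Suc s) \<in> - C"
        using Suc t(2) by auto
      then show "ray p d (Suc s) \<in> comp_of sq_adj (- C) p"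
        using comp_of_step sq_adj_ray_Suc[OF d] by blast
    qed
  qed
  then show ?thesis
    using t(1) by blast
qed

lemma fill_bounding_box:
  assumes "p \<in> fill C" "h = fst \<or> h = snd"
  shows "\<exists>w\<in>C. h w \<le> h p" "\<exists>w\<in>C. h p \<le> h w"
proof -
  have hit: "\<exists>t. ray p d t \<in> C" if "\<bar>fst d\<bar> + \<bar>snd d\<bar> = 1" for d
  proof (cases "p \<in> C")
    case True
    then show ?thesis
      by (intro exI[of _ 0]) (simp add: ray_def)
  next
    case False
    then show ?thesis
      using assms(1) ray_first_hit[OF that] unfolding fill_iff by blast
  qed
  obtain t1 t2 t3 t4 where
    t: "(fst p + int t1, snd p) \<in> C" "(fst p - int t2, snd p) \<in> C"
    "(fst p, snd p + int t3) \<in> C" "(fst p, snd p - int t4) \<in> C"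
    using hit[of "(1, 0)"] hit[of "(-1, 0)"] hit[of "(0, 1)"] hit[of "(0, -1)"] by (auto simp: ray_def)
  have "\<exists>w\<in>C. fst p \<le> fst w" "\<exists>w\<in>C. fst w \<le> fst p"
    "\<exists>w\<in>C. snd p \<le> snd w" "\<exists>w\<in>C. snd w \<le> snd p"
    by (rule bexI[OF _ t(1)] bexI[OF _ t(2)] bexI[OF _ t(3)] bexI[OF _ t(4)]; simp)+
  then show "\<exists>w\<in>C. h w \<le> h p" "\<exists>w\<in>C. h p \<le> h w"
    using assms(2) by auto
qed

lemma fill_hole_boundary:
  assumes "y \<notin> C" "finite (comp_of sq_adj (- C) y)"
  shows "\<exists>z\<in>comp_of sq_adj (- C) y. \<exists>c\<in>C. sq_adj z c"
proof -
  obtain t where t: "ray y (1, 0) t \<in> C" "\<forall>s<t. ray y (1, 0) s \<in> comp_of sq_adj (- C) y"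
    using ray_first_hit[of "(1, 0)", OF _ assms] by auto
  obtain s where "t = Suc s"
    using t(1) assms(1) by (cases t) (auto simp: ray_def)
  then show ?thesis
    using t sq_adj_ray_Suc[of "(1, 0)" y s] by auto
qed


section \<open>Clusters of a set and their fillings\<close>

locale box_clusters =
  fixes B :: "site set"
begin

definition cluster :: "site \<Rightarrow> site set" where
  "cluster c = comp_of box_adj B c"

definition filled :: "site set" where
  "filled = (\<Union>c\<in>B. fill (cluster c))"

lemma cluster_self: "c \<in> cluster c"
  unfolding cluster_def by simp

lemma cluster_subset: "c \<in> B \<Longrightarrow> cluster c \<subseteq> B"
  unfolding cluster_def by (rule comp_of_subset)

lemma cluster_step: "p \<in> cluster c \<Longrightarrow> c \<in> B \<Longrightarrow> q \<in> B \<Longrightarrow> box_adj p q \<Longrightarrow> q \<in> cluster c"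
  using cluster_subset comp_of_step unfolding cluster_def by blast

lemma cluster_eq: "x \<in> cluster c \<Longrightarrow> cluster x = cluster c"
  unfolding cluster_def by (rule comp_of_eq[OF symp_box_adj])

lemma cluster_eq_or_disjoint: "cluster c = cluster c' \<or> cluster c \<inter> cluster c' = {}"
  using cluster_eq by blast

lemma rtranclp_in_cluster:
  assumes "u \<in> cluster c" "w \<in> cluster c"
  shows "(adj_in box_adj B)\<^sup>*\<^sup>* u w"
proof -
  have "w \<in> cluster u"
    using assms cluster_eq by blast
  then show ?thesis
    unfolding cluster_def comp_of_iff .
qed

lemma not_filled_imp_not_in: "a \<notin> filled \<Longrightarrow> a \<notin> B"
  unfolding filled_def fill_def using cluster_self by blast

lemma infinite_sq_comp_not_filled:
  assumes "a \<notin> B" "infinite (comp_of sq_adj (- B) a)"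
  shows "a \<notin> filled"
proof
  assume "a \<in> filled"
  then obtain c where c: "c \<in> B" "a \<in> fill (cluster c)"
    unfolding filled_def by blast
  have "finite (comp_of sq_adj (- cluster c) a)"
    using c assms(1) cluster_subset unfolding fill_iff by blast
  moreover have "comp_of sq_adj (- B) a \<subseteq> comp_of sq_adj (- cluster c) a"
    using comp_of_mono cluster_subset[OF c(1)] by blast
  ultimately show False
    using assms(2) finite_subset by blast
qed

text \<open>A square path can follow a king path through a cluster: the corner of a diagonal step cannot
  lie in another cluster, as it is king-adjacent to the step's start.\<close>

lemma cluster_in_sq_comp:
  assumes c: "c \<in> B" "c' \<in> B" and disj: "cluster c \<inter> cluster c' = {}"
  shows "cluster c \<subseteq> comp_of sq_adj (- cluster c') c"
proof
  let ?C' = "cluster c'"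
  fix u assume "u \<in> cluster c"
  then have "(adj_in box_adj B)\<^sup>*\<^sup>* c u"
    unfolding cluster_def by (simp add: comp_of_iff)
  then show "u \<in> comp_of sq_adj (- ?C') c"
  proof (induction rule: rtranclp_induct)
    case base
    show ?case by simp
  next
    case (step b z)
    have bz: "b \<in> cluster c" "z \<in> cluster c"
      using step(1,2) unfolding cluster_def by (auto simp: comp_of_iff)
    have adj: "box_adj b z" "b \<in> B" "z \<in> B"
      using step(2) by (auto simp: adj_in_def)
    have out: "b \<in> - ?C'" "z \<in> - ?C'"
      using bz disj by auto
    from box_adj_cases[OF adj(1)] show ?case
    proof
      assume "sq_adj b z"
      then show ?thesis
        using comp_of_step[OF step(3) out] by simp
    next
      assume corner: "sq_adj b (fst z, snd b) \<and> sq_adj (fst z, snd b) z"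
      have "(fst z, snd b) \<in> - ?C'"
      proof
        assume "(fst z, snd b) \<in> ?C'"
        then have "b \<in> ?C'"
          using cluster_step cluster_subset c(2) adj(2) corner sq_adj_imp_box_adj symp_box_adj
          by (metis subsetD sympD)
        then show False
          using bz(1) disj by blast
      qed
      then show ?thesis
        using comp_of_step[OF comp_of_step[OF step(3) out(1)] _ out(2)] corner by blast
    qed
  qed
qed

lemma cluster_in_fill_imp_fill_subset:
  assumes c: "c \<in> B" "c' \<in> B" and disj: "cluster c \<inter> cluster c' = {}"
    and x: "x \<in> cluster c" "x \<in> fill (cluster c')"
  shows "fill (cluster c) \<subseteq> fill (cluster c')"
proof
  let ?C = "cluster c" and ?C' = "cluster c'"
  have hole: "finite (comp_of sq_adj (- ?C') x)"
    using x disj unfolding fill_iff by blast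
  have same_hole: "comp_of sq_adj (- ?C') u = comp_of sq_adj (- ?C') x" if "u \<in> ?C" for u
    using cluster_in_sq_comp[OF c disj] that x(1) comp_of_eq[OF symp_sq_adj] by (metis subsetD)
  fix y assume y: "y \<in> fill ?C"
  show "y \<in> fill ?C'"
  proof (cases "y \<in> ?C")
    case True
    then show ?thesis
      using same_hole hole unfolding fill_iff by metis
  next
    case False
    then have finH: "finite (comp_of sq_adj (- ?C) y)"
      using y unfolding fill_iff by blast
    show ?thesis
    proof (rule ccontr)
      let ?G = "comp_of sq_adj (- ?C') y"
      assume "y \<notin> fill ?C'"
      then have yC': "y \<notin> ?C'" and infG: "infinite ?G"
        unfolding fill_iff by auto
      show False
      proof (cases "?G \<inter> ?C = {}")
        case True
        then have "?G \<subseteq> comp_of sq_adj (- ?C' \<inter> - ?C) y"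
          using False by (intro comp_of_restrict) auto
        also have "\<dots> \<subseteq> comp_of sq_adj (- ?C) y"
          by (rule comp_of_mono) auto
        finally show False
          using finH infG finite_subset by blast
      next
        case False
        then obtain w where "w \<in> ?G" "w \<in> ?C"
          by blast
        then show False
          using same_hole comp_of_eq[OF symp_sq_adj] hole infG by metis
      qed
    qed
  qed
qed

lemma fill_clusters_disjoint:
  assumes c: "c \<in> B" "c' \<in> B" and disj: "cluster c \<inter> cluster c' = {}"
    and "\<forall>x\<in>cluster c. x \<notin> fill (cluster c')" "\<forall>x\<in>cluster c'. x \<notin> fill (cluster c)"
  shows "fill (cluster c) \<inter> fill (cluster c') = {}"
proof (rule ccontr)
  let ?C = "cluster c" and ?C' = "cluster c'"
  let ?H = "\<lambda>x. comp_of sq_adj (- ?C) x" and ?H' = "\<lambda>x. comp_of sq_adj (- ?C') x"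
  assume "fill ?C \<inter> fill ?C' \<noteq> {}"
  then obtain x where x: "x \<in> fill ?C" "x \<in> fill ?C'"
    by blast
  have xC: "x \<notin> ?C" "x \<notin> ?C'"
    using x assms(4,5) by blast+
  have finH: "finite (?H x)" and finH': "finite (?H' x)"
    using x xC unfolding fill_iff by auto
  have "?H x \<inter> ?C' = {}"
  proof (rule ccontr)
    assume "?H x \<inter> ?C' \<noteq> {}"
    then obtain w where "w \<in> ?H x" "w \<in> ?C'"
      by blast
    then have "w \<in> fill ?C"
      using finH comp_of_eq[OF symp_sq_adj] unfolding fill_iff by metis
    then show False
      using \<open>w \<in> ?C'\<close> assms(5) by blast
  qed
  then have "?H x \<subseteq> comp_of sq_adj (- ?C \<inter> - ?C') x"
    using xC by (intro comp_of_restrict) auto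
  also have "\<dots> \<subseteq> ?H' x"
    by (rule comp_of_mono) auto
  finally have HH: "?H x \<subseteq> ?H' x" .
  obtain h d where h: "h \<in> ?H x" "d \<in> ?C" "sq_adj h d"
    using fill_hole_boundary[OF xC(1) finH] by blast
  have "h \<in> ?H' x" "h \<in> - ?C'" "d \<in> - ?C'"
    using h HH \<open>?H x \<inter> ?C' = {}\<close> disj by auto
  then have "d \<in> ?H' x"
    using comp_of_step h(3) by blast
  then have "d \<in> fill ?C'"
    using finH' comp_of_eq[OF symp_sq_adj] unfolding fill_iff by metis
  then show False
    using h(2) assms(4) by blast
qed

lemma fill_clusters_nested:
  assumes c: "c \<in> B" "c' \<in> B" and meet: "fill (cluster c) \<inter> fill (cluster c') \<noteq> {}"
  shows "fill (cluster c) \<subseteq> fill (cluster c') \<or> fill (cluster c') \<subseteq> fill (cluster c)"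
proof (cases "cluster c = cluster c'")
  case False
  then have "cluster c \<inter> cluster c' = {}" "cluster c' \<inter> cluster c = {}"
    using cluster_eq_or_disjoint by blast+
  then show ?thesis
    using cluster_in_fill_imp_fill_subset[OF c] cluster_in_fill_imp_fill_subset[OF c(2,1)]
      fill_clusters_disjoint[OF c] meet by blast
qed simp

lemma fill_clusters_sq_adj:
  assumes c: "c \<in> B" "c' \<in> B" and pq: "p \<in> fill (cluster c)" "q \<in> fill (cluster c')" "sq_adj p q"
  shows "q \<in> fill (cluster c) \<or> p \<in> fill (cluster c')"
proof -
  have "q \<in> cluster c" if "p \<in> cluster c" "q \<in> cluster c'"
    using that cluster_subset[OF c(2)] cluster_step[OF _ c(1)] sq_adj_imp_box_adj[OF pq(3)] by blast
  then show ?thesis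
    using fill_step[OF pq(1) _ _ pq(3)] fill_step[OF pq(2) _ _ sympD[OF symp_sq_adj pq(3)]]
    unfolding fill_iff by blast
qed

lemma fill_clusters_box_adj_meet:
  assumes c: "c \<in> B" "c' \<in> B" and pq: "p \<in> fill (cluster c)" "q \<in> fill (cluster c')" "box_adj p q"
  shows "fill (cluster c) \<inter> fill (cluster c') \<noteq> {}"
  using box_adj_cases[OF pq(3)]
proof
  assume "sq_adj p q"
  then show ?thesis
    using fill_clusters_sq_adj[OF c pq(1,2)] pq(1,2) by blast
next
  let ?r = "(fst q, snd p)"
  assume corner: "sq_adj p ?r \<and> sq_adj ?r q"
  consider "p \<in> cluster c" "q \<in> cluster c'" | "q \<notin> cluster c'" | "p \<notin> cluster c"
    by blast
  then show ?thesis
  proof cases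
    case 1
    then have "q \<in> fill (cluster c)"
      using cluster_step[OF _ c(1)] cluster_subset[OF c(2)] pq(3) unfolding fill_iff by blast
    then show ?thesis
      using pq(2) by blast
  next
    case 2
    then have "?r \<in> fill (cluster c')"
      using fill_step[OF pq(2) _ _ sympD[OF symp_sq_adj]] corner unfolding fill_iff by blast
    then show ?thesis
      using fill_clusters_sq_adj[OF c pq(1)] corner pq(1) by blast
  next
    case 3
    then have "?r \<in> fill (cluster c)"
      using fill_step[OF pq(1)] corner unfolding fill_iff by blast
    then show ?thesis
      using fill_clusters_sq_adj[OF c _ pq(2)] corner pq(2) by blast
  qed
qed

lemma rtranclp_box_adj_in_filled:
  assumes "(adj_in box_adj X)\<^sup>*\<^sup>* x y" "x \<in> X" "X \<subseteq> filled"
  shows "\<exists>c\<in>B. x \<in> fill (cluster c) \<and> y \<in> fill (cluster c)"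
  using assms(1)
proof (induction rule: rtranclp_induct)
  case base
  then show ?case
    using assms(2,3) unfolding filled_def by blast
next
  case (step y z)
  obtain c where c: "c \<in> B" "x \<in> fill (cluster c)" "y \<in> fill (cluster c)"
    using step(3) by blast
  have "z \<in> X" "box_adj y z"
    using step(2) unfolding adj_in_def by auto
  then obtain c' where c': "c' \<in> B" "z \<in> fill (cluster c')"
    using assms(3) unfolding filled_def by blast
  then show ?case
    using fill_clusters_nested[OF c(1) c'(1) fill_clusters_box_adj_meet[OF c(1) c'(1) c(3) c'(2)]]
      \<open>box_adj y z\<close> c by blast
qed

end


section \<open>Small clusters\<close>

context box_clusters
begin

definition small_clusters :: "nat \<Rightarrow> bool" where
  "small_clusters K \<longleftrightarrow>
     (\<forall>n\<ge>K. \<forall>v\<in>B. norm_inf v \<le> 4 * int n \<longrightarrow> (\<forall>w\<in>cluster v. dist_inf w v < int n))"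

lemma small_clustersD:
  "small_clusters K \<Longrightarrow> K \<le> n \<Longrightarrow> v \<in> B \<Longrightarrow> norm_inf v \<le> 4 * int n \<Longrightarrow> w \<in> cluster v
    \<Longrightarrow> dist_inf w v < int n"
  unfolding small_clusters_def by blast

lemma small_clusters_finite_cluster:
  assumes small: "small_clusters K" and c: "c \<in> B"
  shows "finite (cluster c)"
proof (rule ccontr)
  define n where "n = nat (max (int K) (norm_inf c))"
  assume "infinite (cluster c)"
  then obtain w where w: "w \<in> cluster c" "dist_inf w c > int n"
    using infinite_imp_dist_inf_unbounded by blast
  have "K \<le> n" "norm_inf c \<le> 4 * int n"
    unfolding n_def using norm_inf_nonneg[of c] by auto
  then have "dist_inf w c < int n"
    using small_clustersD[OF small _ c _ w(1)] by blast
  then show False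
    using w(2) by simp
qed

text \<open>The cluster meets the line through \<open>p\<close> orthogonal to the coordinate \<open>h\<close> in a point \<open>v\<close>,
  and the spread of the cluster in direction \<open>h\<close> around \<open>v\<close> bounds both \<open>norm_inf v\<close> and
  \<open>\<bar>h p - h q\<bar>\<close>; since that spread is attained, small clusters forbid it.\<close>

lemma fill_cluster_coordinate_spread:
  fixes h k :: "site \<Rightarrow> int"
  assumes hk: "(h = fst \<and> k = snd) \<or> (h = snd \<and> k = fst)"
    and small: "small_clusters K" and c: "c \<in> B"
    and p: "p \<in> fill (cluster c)" and q: "q \<in> fill (cluster c)"
    and far: "2 * int K \<le> \<bar>h p - h q\<bar>" "2 * norm_inf p \<le> 3 * \<bar>h p - h q\<bar>"
  shows False
proof -
  let ?C = "cluster c"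
  have coord: "\<bar>h a - h b\<bar> \<le> dist_inf a b" "\<bar>k a - k b\<bar> \<le> dist_inf a b"
    "norm_inf a = max \<bar>h a\<bar> \<bar>k a\<bar>" for a b
    using hk by (auto simp: dist_inf_def norm_inf_def)
  have bbox: "\<exists>w\<in>?C. f w \<le> f x" "\<exists>w\<in>?C. f x \<le> f w" if "x \<in> fill ?C" "f = h \<or> f = k" for x f
    using fill_bounding_box[OF that(1)] that(2) hk by metis+
  obtain w1 w2 where w: "w1 \<in> ?C" "w2 \<in> ?C" "k w1 \<le> k p" "k p \<le> k w2"
    using bbox[OF p] by blast
  have "\<bar>k a - k b\<bar> \<le> 1" if "box_adj a b" for a b
    using coord(2)[of a b] that unfolding box_adj_iff_dist_inf by simp
  then obtain v where v: "(adj_in box_adj B)\<^sup>*\<^sup>* w1 v" "k v = k p"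
    using rtranclp_adj_in_intermediate_value[OF rtranclp_in_cluster[OF w(1,2)], of k "k p"] w(3,4)
    by auto
  have "v \<in> cluster w1"
    using v(1) unfolding cluster_def comp_of_iff .
  then have vC: "v \<in> ?C" "v \<in> B"
    using cluster_eq[OF w(1)] cluster_subset[OF c] by auto
  define m where "m = Max ((\<lambda>w. \<bar>h w - h v\<bar>) ` ?C)"
  have finC: "finite ?C"
    by (rule small_clusters_finite_cluster[OF small c])
  have m_ge: "\<bar>h w - h v\<bar> \<le> m" if "w \<in> ?C" for w
    unfolding m_def using finC that by simp
  have "m \<in> (\<lambda>w. \<bar>h w - h v\<bar>) ` ?C"
    unfolding m_def using finC vC(1) by (intro Max_in) auto
  then obtain w0 where w0: "w0 \<in> ?C" "\<bar>h w0 - h v\<bar> = m"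
    by auto
  have near: "\<bar>h x - h v\<bar> \<le> m" if x: "x \<in> fill ?C" for x
  proof -
    obtain l r where "l \<in> ?C" "r \<in> ?C" "h l \<le> h x" "h x \<le> h r"
      using bbox[OF x] by blast
    then show ?thesis
      using m_ge[of l] m_ge[of r] by linarith
  qed
  define \<delta> where "\<delta> = \<bar>h p - h q\<bar>"
  have pq: "\<delta> \<le> 2 * m"
    unfolding \<delta>_def using near[OF p] near[OF q] by linarith
  have far': "2 * int K \<le> \<delta>" "2 * norm_inf p \<le> 3 * \<delta>"
    unfolding \<delta>_def using far by simp_all
  have "\<bar>h p\<bar> \<le> norm_inf p" "\<bar>k p\<bar> \<le> norm_inf p"
    using coord(3)[of p] by auto
  moreover have "norm_inf p \<le> 3 * m"
    using pq far'(2) by linarith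
  moreover have "\<bar>h v\<bar> \<le> \<bar>h p\<bar> + \<bar>h p - h v\<bar>"
    using abs_triangle_ineq4[of "h p" "h p - h v"] by simp
  ultimately have "\<bar>h v\<bar> \<le> 4 * m" "\<bar>k v\<bar> \<le> 4 * m"
    using near[OF p] v(2) by linarith+
  then have nv: "norm_inf v \<le> 4 * int (nat m)"
    using coord(3)[of v] pq far'(1) by simp
  have "K \<le> nat m"
    using pq far'(1) by linarith
  then have "dist_inf w0 v < m"
    using small_clustersD[OF small _ vC(2) nv] cluster_eq[OF vC(1)] w0(1) pq far'(1) by fastforce
  then show False
    using coord(1)[of w0 v] w0(2) by linarith
qed

lemma fill_cluster_far_points:
  assumes small: "small_clusters K" and c: "c \<in> B"
    and p: "p \<in> fill (cluster c)" and q: "q \<in> fill (cluster c)"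
    and far: "2 * int K \<le> dist_inf p q"
  shows "3 * dist_inf p q < 2 * norm_inf p"
proof (rule ccontr, cases "\<bar>snd p - snd q\<bar> \<le> \<bar>fst p - fst q\<bar>")
  case True
  assume "\<not> ?thesis"
  moreover have "dist_inf p q = \<bar>fst p - fst q\<bar>"
    using True unfolding dist_inf_def by simp
  ultimately show False
    using fill_cluster_coordinate_spread[of fst snd, OF _ small c p q] far by simp
next
  case False
  assume "\<not> ?thesis"
  moreover have "dist_inf p q = \<bar>snd p - snd q\<bar>"
    using False unfolding dist_inf_def by simp
  ultimately show False
    using fill_cluster_coordinate_spread[of snd fst, OF _ small c p q] far by simp
qed

lemma exists_unfilled_on_axis:
  assumes small: "small_clusters K" and L: "1 \<le> L" "2 * int K \<le> L"
  shows "\<exists>x. L \<le> x \<and> x \<le> 2 * L \<and> (x, 0) \<notin> filled"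
proof (rule ccontr)
  define X :: "site set" where "X = {z. snd z = 0 \<and> L \<le> fst z \<and> fst z \<le> 2 * L}"
  assume "\<not> ?thesis"
  then have "X \<subseteq> filled"
    unfolding X_def by (auto simp: prod_eq_iff)
  moreover have "(adj_in sq_adj X)\<^sup>*\<^sup>* (L, 0) (2 * L, 0)"
    by (rule rtranclp_sq_adj_row) (use L in \<open>auto simp: X_def\<close>)
  then have "(adj_in box_adj X)\<^sup>*\<^sup>* (L, 0) (2 * L, 0)"
    using rtranclp_adj_in_mono sq_adj_imp_box_adj by blast
  moreover have "(L, 0) \<in> X"
    unfolding X_def using L by simp
  ultimately obtain c where "c \<in> B" "(L, 0) \<in> fill (cluster c)" "(2 * L, 0) \<in> fill (cluster c)"
    using rtranclp_box_adj_in_filled by blast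
  moreover have "dist_inf (L, 0) (2 * L, 0) = L" "norm_inf (L, 0) = L"
    unfolding dist_inf_def norm_inf_def using L by simp_all
  ultimately show False
    using fill_cluster_far_points[OF small] L by fastforce
qed

lemma exists_unfilled_far:
  assumes "small_clusters K"
  shows "\<exists>a. a \<notin> filled \<and> norm_inf a > N"
proof -
  define L where "L = max 1 (max (2 * int K) (N + 1))"
  have L: "1 \<le> L" "2 * int K \<le> L" "N + 1 \<le> L"
    unfolding L_def by auto
  obtain x where x: "L \<le> x" "(x, 0) \<notin> filled"
    using exists_unfilled_on_axis[OF assms L(1,2)] by blast
  then have "norm_inf (x, 0) > N"
    using L(3) unfolding norm_inf_def by simp
  then show ?thesis
    using x(2) by blast
qed

end


section \<open>Square paths and planar topology\<close>

definition lattice_point :: "site \<Rightarrow> complex" where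
  "lattice_point z = Complex (of_int (fst z)) (of_int (snd z))"

definition tile :: "site \<Rightarrow> complex set" where
  "tile z = cbox (lattice_point z - Complex (1/2) (1/2)) (lattice_point z + Complex (1/2) (1/2))"

definition tiles :: "site set \<Rightarrow> complex set" where
  "tiles S = (\<Union>z\<in>S. tile z)"

lemma mem_tile_iff:
  "p \<in> tile z \<longleftrightarrow> \<bar>Re p - of_int (fst z)\<bar> \<le> 1/2 \<and> \<bar>Im p - of_int (snd z)\<bar> \<le> 1/2"
proof -
  have "p \<in> tile z \<longleftrightarrow> (of_int (fst z) - 1/2 \<le> Re p \<and> Re p \<le> of_int (fst z) + 1/2) \<and>
      (of_int (snd z) - 1/2 \<le> Im p \<and> Im p \<le> of_int (snd z) + 1/2)"
    unfolding tile_def in_cbox_complex_iff lattice_point_def by simp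
  then show ?thesis
    by (simp only: abs_le_iff) argo
qed

lemma compact_tiles: "finite S \<Longrightarrow> compact (tiles S)"
  unfolding tiles_def tile_def by (rule compact_UN) auto

lemma tiles_Un: "tiles (S \<union> T) = tiles S \<union> tiles T"
  unfolding tiles_def by auto

lemma int_near_real_unique:
  fixes x :: real and a b :: int
  assumes "\<bar>x - a\<bar> \<le> 1/2" "\<bar>x - b\<bar> \<le> 1/2"
  shows "\<bar>a - b\<bar> \<le> 1"
proof -
  have "\<bar>of_int (a - b)\<bar> \<le> (1 :: real)"
    using assms by linarith
  then show ?thesis
    by linarith
qed

lemma lattice_point_in_tile_iff: "lattice_point a \<in> tile z \<longleftrightarrow> z = a"
proof -
  have "\<bar>of_int (x - y)\<bar> \<le> (1/2 :: real) \<longleftrightarrow> x = y" for x y :: int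
    by linarith
  then show ?thesis
    unfolding mem_tile_iff lattice_point_def by (simp add: prod_eq_iff abs_minus_commute) metis
qed

lemma tiles_disjoint:
  assumes "\<forall>s\<in>S. \<forall>t\<in>T. 2 \<le> dist_inf s t"
  shows "tiles S \<inter> tiles T = {}"
proof -
  have "\<not> (p \<in> tile s \<and> p \<in> tile t)" if "s \<in> S" "t \<in> T" for p s t
  proof
    assume "p \<in> tile s \<and> p \<in> tile t"
    then have "\<bar>fst s - fst t\<bar> \<le> 1" "\<bar>snd s - snd t\<bar> \<le> 1"
      unfolding mem_tile_iff by (meson int_near_real_unique)+
    then show False
      using assms that unfolding dist_inf_def by force
  qed
  then show ?thesis
    unfolding tiles_def by blast
qed

text \<open>Used coordinatewise: along a unit segment, only the two endpoint tiles are met.\<close>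

lemma int_near_unit_segment:
  fixes u :: real and a b d :: int
  assumes "\<bar>d\<bar> \<le> 1" "0 \<le> u" "u \<le> 1" "\<bar>a + u * d - b\<bar> \<le> 1/2"
  shows "b = a \<or> b = a + d"
proof -
  have k: "\<bar>of_int (b - a) - u * of_int d\<bar> \<le> (1/2 :: real)"
    using assms(4) by (simp add: abs_minus_commute algebra_simps)
  consider (neg) "d = -1" | (zero) "d = 0" | (pos) "d = 1"
    using assms(1) by linarith
  then show ?thesis
  proof cases
    case neg
    then have "\<bar>of_int (b - a) + u\<bar> \<le> (1/2 :: real)"
      using k by simp
    then have "-2 < real_of_int (b - a)" "real_of_int (b - a) < 1"
      using assms(2,3) by linarith+
    then show ?thesis
      using neg by linarith
  next
    case zero
    then have "\<bar>of_int (b - a)\<bar> \<le> (1/2 :: real)"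
      using k by simp
    then show ?thesis
      by linarith
  next
    case pos
    then have "\<bar>of_int (b - a) - u\<bar> \<le> (1/2 :: real)"
      using k by simp
    then have "-1 < real_of_int (b - a)" "real_of_int (b - a) < 2"
      using assms(2,3) by linarith+
    then show ?thesis
      using pos by linarith
  qed
qed

lemma tile_meets_segment:
  assumes "sq_adj y z" "p \<in> closed_segment (lattice_point y) (lattice_point z)" "p \<in> tile w"
  shows "w = y \<or> w = z"
proof -
  obtain u :: real where u: "0 \<le> u" "u \<le> 1" "p = (1 - u) *\<^sub>R lattice_point y + u *\<^sub>R lattice_point z"
    using assms(2) unfolding closed_segment_def by blast
  have "Re p = fst y + u * (fst z - fst y)" "Im p = snd y + u * (snd z - snd y)"
    unfolding u(3) lattice_point_def by (simp_all add: algebra_simps)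
  moreover have "\<bar>fst z - fst y\<bar> \<le> 1" "\<bar>snd z - snd y\<bar> \<le> 1" "fst y = fst z \<or> snd y = snd z"
    using assms(1) unfolding sq_adj_def by auto
  ultimately have "fst w = fst y \<or> fst w = fst z" "snd w = snd y \<or> snd w = snd z"
    using assms(3) u(1,2) int_near_unit_segment[of "fst z - fst y" u "fst y" "fst w"]
      int_near_unit_segment[of "snd z - snd y" u "snd y" "snd w"]
    unfolding mem_tile_iff by auto
  then show ?thesis
    using \<open>fst y = fst z \<or> snd y = snd z\<close> by (auto simp: prod_eq_iff)
qed

lemma rtranclp_sq_adj_imp_connected_component:
  assumes "(adj_in sq_adj (- S))\<^sup>*\<^sup>* a b" "a \<notin> S"
  shows "connected_component (- tiles S) (lattice_point a) (lattice_point b)"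
  using assms(1)
proof (induction rule: rtranclp_induct)
  case base
  have "lattice_point a \<notin> tile z" if "z \<in> S" for z
    using that assms(2) lattice_point_in_tile_iff[of a z] by auto
  then have "lattice_point a \<notin> tiles S"
    unfolding tiles_def by blast
  then show ?case
    by simp
next
  case (step y z)
  have yz: "y \<notin> S" "z \<notin> S" "sq_adj y z"
    using step(2) unfolding adj_in_def by auto
  let ?seg = "closed_segment (lattice_point y) (lattice_point z)"
  have "?seg \<subseteq> - tiles S"
  proof
    fix p assume p: "p \<in> ?seg"
    show "p \<in> - tiles S"
    proof
      assume "p \<in> tiles S"
      then obtain w where "w \<in> S" "p \<in> tile w"
        unfolding tiles_def by blast
      then show False
        using tile_meets_segment[OF yz(3) p] yz(1,2) by blast
    qed
  qed
  then have "connected_component (- tiles S) (lattice_point y) (lattice_point z)"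
    unfolding connected_component_def
    by (intro exI[of _ ?seg]) (simp add: connected_segment)
  then show ?case
    by (rule connected_component_trans[OF step(3)])
qed

lemma round_in_tile: "p \<in> tile (round (Re p), round (Im p))"
  using of_int_round_abs_le[of "Re p"] of_int_round_abs_le[of "Im p"]
  unfolding mem_tile_iff by (simp add: abs_minus_commute)

text \<open>Two tiles through a point avoiding \<open>tiles S\<close> are joined by at most two square steps
  through a corner tile, which also contains the point.\<close>

lemma tile_overlap_sq_comp:
  assumes p: "p \<notin> tiles S" "p \<in> tile c" "p \<in> tile c'" and c: "c \<in> comp_of sq_adj (- S) a"
  shows "c' \<in> comp_of sq_adj (- S) a"
proof -
  let ?r = "(fst c', snd c)"
  have "p \<in> tile ?r"
    using p(2,3) unfolding mem_tile_iff by simp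
  then have notS: "c \<notin> S" "c' \<notin> S" "?r \<notin> S"
    using p unfolding tiles_def by blast+
  have "\<bar>fst c - fst c'\<bar> \<le> 1" "\<bar>snd c - snd c'\<bar> \<le> 1"
    using p(2,3) unfolding mem_tile_iff by (meson int_near_real_unique)+
  then have "?r = c \<or> sq_adj c ?r" "c' = ?r \<or> sq_adj ?r c'"
    unfolding sq_adj_def by (auto simp: prod_eq_iff)
  then show ?thesis
    using c notS comp_of_step by (metis ComplI)
qed

lemma connected_avoiding_tiles_in_sq_comp:
  assumes P: "connected P" "bounded P" "P \<inter> tiles S = {}" and a: "lattice_point a \<in> P"
  shows "P \<subseteq> tiles (comp_of sq_adj (- S) a)"
proof -
  let ?D = "comp_of sq_adj (- S) a"
  let ?rnd = "\<lambda>p. (round (Re p), round (Im p))"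
  obtain r where r: "\<And>p. p \<in> P \<Longrightarrow> norm p \<le> r"
    using P(2) unfolding bounded_iff by blast
  define R where "R = {z. norm_inf z \<le> \<lceil>r\<rceil> + 1}"
  have "?rnd p \<in> R" if "p \<in> P" for p
  proof -
    have "\<bar>Re p\<bar> \<le> r" "\<bar>Im p\<bar> \<le> r"
      using r[OF that] abs_Re_le_cmod abs_Im_le_cmod order_trans by blast+
    moreover have "\<bar>of_int (round (Re p)) - Re p\<bar> \<le> 1/2" "\<bar>of_int (round (Im p)) - Im p\<bar> \<le> 1/2"
      by (rule of_int_round_abs_le)+
    ultimately have "\<bar>round (Re p)\<bar> \<le> \<lceil>r\<rceil> + 1" "\<bar>round (Im p)\<bar> \<le> \<lceil>r\<rceil> + 1"
      using le_of_int_ceiling[of r] by linarith+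
    then show ?thesis
      unfolding R_def norm_inf_def by simp
  qed
  then have cover: "P \<subseteq> tiles (?D \<inter> R) \<union> tiles (R - ?D)"
    using round_in_tile unfolding tiles_def by blast
  have sep: "tiles (?D \<inter> R) \<inter> tiles (R - ?D) \<inter> P = {}"
    using tile_overlap_sq_comp P(3) unfolding tiles_def by blast
  have "finite R"
    unfolding R_def by (rule finite_norm_inf_le)
  then have "closed (tiles (?D \<inter> R))" "closed (tiles (R - ?D))"
    by (simp_all add: compact_tiles compact_imp_closed)
  moreover have "a \<in> R"
    using a \<open>\<And>p. p \<in> P \<Longrightarrow> ?rnd p \<in> R\<close>[of "lattice_point a"] by (simp add: lattice_point_def)
  then have "lattice_point a \<in> tiles (?D \<inter> R)"
    using lattice_point_in_tile_iff unfolding tiles_def by auto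
  ultimately have "tiles (R - ?D) \<inter> P = {}"
    using P(1) cover sep a unfolding connected_closed by blast
  then show ?thesis
    using cover unfolding tiles_def by blast
qed

lemma connected_component_imp_rtranclp_sq_adj:
  assumes "finite S" "connected_component (- tiles S) (lattice_point a) (lattice_point b)"
  shows "(adj_in sq_adj (- S))\<^sup>*\<^sup>* a b"
proof -
  have "open (- tiles S)"
    using compact_tiles[OF assms(1)] by (simp add: compact_imp_closed open_Compl)
  then have "path_component (- tiles S) (lattice_point a) (lattice_point b)"
    using assms(2) open_path_connected_component[of "- tiles S"] by simp
  then obtain g where g: "path g" "path_image g \<subseteq> - tiles S"
    "pathstart g = lattice_point a" "pathfinish g = lattice_point b"
    unfolding path_component_def by blast
  have "path_image g \<subseteq> tiles (comp_of sq_adj (- S) a)"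
  proof (rule connected_avoiding_tiles_in_sq_comp)
    show "connected (path_image g)" "bounded (path_image g)"
      using g(1) by (rule connected_path_image, rule bounded_path_image)
    show "path_image g \<inter> tiles S = {}"
      using g(2) by blast
    show "lattice_point a \<in> path_image g"
      using pathstart_in_path_image[of g] g(3) by simp
  qed
  moreover have "lattice_point b \<in> path_image g"
    using pathfinish_in_path_image[of g] g(4) by simp
  ultimately have "lattice_point b \<in> tiles (comp_of sq_adj (- S) a)"
    by (rule subsetD)
  then obtain c where "c \<in> comp_of sq_adj (- S) a" "lattice_point b \<in> tile c"
    unfolding tiles_def by blast
  then show ?thesis
    by (simp add: lattice_point_in_tile_iff comp_of_iff)
qed

text \<open>Janiszewski's theorem, transported to square paths: two finite obstacles that are far enough
  apart for their tiles to be disjoint cannot together separate points that neither separates.\<close>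

lemma rtranclp_sq_adj_avoiding_Un:
  assumes fin: "finite S" "finite T" and far: "\<forall>s\<in>S. \<forall>t\<in>T. 2 \<le> dist_inf s t"
    and a: "a \<notin> S" "a \<notin> T"
    and paths: "(adj_in sq_adj (- S))\<^sup>*\<^sup>* a b" "(adj_in sq_adj (- T))\<^sup>*\<^sup>* a b"
  shows "(adj_in sq_adj (- (S \<union> T)))\<^sup>*\<^sup>* a b"
proof -
  have "connected_component (- (tiles S \<union> tiles T)) (lattice_point a) (lattice_point b)"
  proof (rule Janiszewski_weak)
    show "compact (tiles S)" "compact (tiles T)"
      using fin by (simp_all add: compact_tiles)
    show "connected (tiles S \<inter> tiles T)"
      using tiles_disjoint[OF far] by simp
    show "connected_component (- tiles S) (lattice_point a) (lattice_point b)"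
      by (rule rtranclp_sq_adj_imp_connected_component[OF paths(1) a(1)])
    show "connected_component (- tiles T) (lattice_point a) (lattice_point b)"
      by (rule rtranclp_sq_adj_imp_connected_component[OF paths(2) a(2)])
  qed
  then show ?thesis
    using connected_component_imp_rtranclp_sq_adj[of "S \<union> T"] fin by (simp add: tiles_Un)
qed


lemma rtranclp_sq_adj_avoiding_separated_Union:
  assumes "finite F" "\<forall>C\<in>F. finite C" "finite T"
    and "\<forall>C\<in>F. \<forall>C'\<in>F. C \<noteq> C' \<longrightarrow> (\<forall>s\<in>C. \<forall>t\<in>C'. 2 \<le> dist_inf s t)"
    and "\<forall>C\<in>F. \<forall>s\<in>C. \<forall>t\<in>T. 2 \<le> dist_inf s t"
    and "a \<notin> \<Union>F \<union> T"
    and "\<forall>C\<in>F. (adj_in sq_adj (- C))\<^sup>*\<^sup>* a b" "(adj_in sq_adj (- T))\<^sup>*\<^sup>* a b"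
  shows "(adj_in sq_adj (- (\<Union>F \<union> T)))\<^sup>*\<^sup>* a b"
  using assms
proof (induction F rule: finite_induct)
  case empty
  then show ?case by simp
next
  case (insert C F)
  have "(adj_in sq_adj (- (C \<union> (\<Union>F \<union> T))))\<^sup>*\<^sup>* a b"
  proof (rule rtranclp_sq_adj_avoiding_Un)
    show "finite C" "finite (\<Union>F \<union> T)"
      using insert.hyps(1) insert.prems(1,2) by auto
    show "\<forall>s\<in>C. \<forall>t\<in>\<Union>F \<union> T. 2 \<le> dist_inf s t"
    proof (intro ballI)
      fix s t assume "s \<in> C" "t \<in> \<Union>F \<union> T"
      moreover have "C \<noteq> C'" if "C' \<in> F" for C'
        using that insert.hyps(2) by blast
      ultimately show "2 \<le> dist_inf s t"
        using insert.prems(3,4) by auto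
    qed
    show "(adj_in sq_adj (- (\<Union>F \<union> T)))\<^sup>*\<^sup>* a b"
      using insert by simp
  qed (use insert.prems in auto)
  then show ?case
    by (simp add: Un_assoc)
qed

lemma rtranclp_sq_adj_inside_sphere:
  assumes "(adj_in sq_adj X)\<^sup>*\<^sup>* a z" "\<forall>x\<in>X. norm_inf x \<noteq> M" "norm_inf a < M"
  shows "(adj_in sq_adj (X \<inter> {x. norm_inf x < M}))\<^sup>*\<^sup>* a z"
  using assms(1)
proof (induction rule: rtranclp_induct)
  case base
  show ?case by simp
next
  case (step y z)
  have y: "norm_inf y < M"
    using rtranclp_adj_in_target[OF step(3)] assms(3) by auto
  have yz: "y \<in> X" "z \<in> X" "sq_adj y z"
    using step(2) unfolding adj_in_def by auto
  have "norm_inf z \<noteq> M" "\<bar>norm_inf y - norm_inf z\<bar> \<le> 1"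
    using assms(2) yz sq_adj_norm_inf by blast+
  then have "norm_inf z < M"
    using y by linarith
  then have "adj_in sq_adj (X \<inter> {x. norm_inf x < M}) y z"
    using y yz unfolding adj_in_def by blast
  then show ?case
    by (rule rtranclp.rtrancl_into_rtrancl[OF step(3)])
qed


section \<open>The infinite square component\<close>

context box_clusters
begin

lemma dist_inf_cluster_outside:
  assumes "c \<in> B" "s \<in> cluster c" "t \<in> B" "t \<notin> cluster c"
  shows "2 \<le> dist_inf s t"
proof (rule ccontr)
  assume "\<not> 2 \<le> dist_inf s t"
  moreover have "s \<noteq> t"
    using assms(2,4) by blast
  then have "dist_inf s t \<noteq> 0"
    unfolding dist_inf_def by (auto simp: prod_eq_iff)
  ultimately have "box_adj s t"
    unfolding box_adj_iff_dist_inf dist_inf_def by auto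
  then show False
    using cluster_step assms by blast
qed

text \<open>Clusters near \<open>a\<close> and \<open>b\<close> are finite, so each leaves \<open>a\<close> and \<open>b\<close> in its unique infinite
  hole; the discrete Janiszewski lemma combines them with the rest of \<open>B\<close> inside a large sphere,
  which is itself added as an obstacle to trap the path.\<close>

lemma unfilled_sq_connected:
  assumes small: "small_clusters K" and ab: "a \<notin> filled" "b \<notin> filled"
  shows "(adj_in sq_adj (- B))\<^sup>*\<^sup>* a b"
proof -
  define N where "N = max (norm_inf a) (norm_inf b)"
  define Cs where "Cs = cluster ` (B \<inter> {z. norm_inf z \<le> N})"
  have finCs: "finite Cs" "\<forall>C\<in>Cs. finite C"
    unfolding Cs_def using finite_norm_inf_le[of N] small_clusters_finite_cluster[OF small] by auto
  then obtain NS where NS: "\<forall>z\<in>\<Union>Cs. norm_inf z \<le> NS"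
    using finite_imp_norm_inf_bounded[of "\<Union>Cs"] by blast
  define M where "M = max N NS + 2"
  define T where "T = ((B - \<Union>Cs) \<inter> {z. norm_inf z \<le> M}) \<union> {z. norm_inf z = M}"
  have aN: "norm_inf a \<le> N" "norm_inf b \<le> N" and aB: "a \<notin> B" "b \<notin> B"
    unfolding N_def using ab not_filled_imp_not_in by auto
  have Cs: "\<And>C. C \<in> Cs \<Longrightarrow> \<exists>c\<in>B. C = cluster c"
    unfolding Cs_def by blast
  have near_in_Cs: "z \<in> \<Union>Cs" if "z \<in> B" "norm_inf z \<le> N" for z
    using that cluster_self unfolding Cs_def by blast
  have "(adj_in sq_adj (- (\<Union>Cs \<union> T)))\<^sup>*\<^sup>* a b"
  proof (rule rtranclp_sq_adj_avoiding_separated_Union[OF finCs])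
    show "finite T"
      unfolding T_def by (rule finite_subset[OF _ finite_norm_inf_le[of M]]) auto
    show "\<forall>C\<in>Cs. \<forall>C'\<in>Cs. C \<noteq> C' \<longrightarrow> (\<forall>s\<in>C. \<forall>t\<in>C'. 2 \<le> dist_inf s t)"
    proof (intro ballI impI)
      fix C C' s t assume CC': "C \<in> Cs" "C' \<in> Cs" "C \<noteq> C'" and st: "s \<in> C" "t \<in> C'"
      obtain c c' where c: "c \<in> B" "C = cluster c" "c' \<in> B" "C' = cluster c'"
        using Cs CC'(1,2) by metis
      have "t \<notin> cluster c"
      proof
        assume "t \<in> cluster c"
        then have "cluster c = cluster c'"
          using cluster_eq st(2) c(4) by metis
        then show False
          using CC'(3) c(2,4) by simp
      qed
      then show "2 \<le> dist_inf s t"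
        using dist_inf_cluster_outside[OF c(1)] st c cluster_subset by blast
    qed
    show "\<forall>C\<in>Cs. \<forall>s\<in>C. \<forall>t\<in>T. 2 \<le> dist_inf s t"
    proof (intro ballI)
      fix C s t assume C: "C \<in> Cs" and s: "s \<in> C" and t: "t \<in> T"
      obtain c where c: "c \<in> B" "C = cluster c"
        using Cs C by metis
      consider "t \<in> B" "t \<notin> \<Union>Cs" | "norm_inf t = M"
        using t unfolding T_def by blast
      then show "2 \<le> dist_inf s t"
      proof cases
        case 1
        then show ?thesis
          using dist_inf_cluster_outside[OF c(1)] s C c(2) by blast
      next
        case 2
        have "norm_inf s \<le> NS"
          using NS s C by blast
        then show ?thesis
          using 2 norm_inf_le_dist_inf[of t s] unfolding M_def by linarith
      qed
    qed
    have "a \<notin> C" if "C \<in> Cs" for C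
      using that Cs aB(1) cluster_subset by blast
    moreover have "a \<notin> T"
      using aB(1) aN(1) unfolding T_def M_def by auto
    ultimately show "a \<notin> \<Union>Cs \<union> T"
      by blast
    show "\<forall>C\<in>Cs. (adj_in sq_adj (- C))\<^sup>*\<^sup>* a b"
    proof
      fix C assume C: "C \<in> Cs"
      then obtain c where c: "c \<in> B" "C = cluster c"
        using Cs by metis
      then have "a \<notin> fill C" "b \<notin> fill C"
        using ab unfolding filled_def by auto
      then have "infinite (comp_of sq_adj (- C) a)" "infinite (comp_of sq_adj (- C) b)"
        unfolding fill_iff by auto
      then have "comp_of sq_adj (- C) b = comp_of sq_adj (- C) a"
        using infinite_sq_comp_unique finCs(2) C by blast
      then have "b \<in> comp_of sq_adj (- C) a"
        by (metis comp_of_self)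
      then show "(adj_in sq_adj (- C))\<^sup>*\<^sup>* a b"
        unfolding comp_of_iff .
    qed
    have "z \<notin> T" if "norm_inf z \<le> N" for z
      using that near_in_Cs unfolding T_def M_def by auto
    then have "{z. norm_inf z \<le> N} \<subseteq> - T"
      by blast
    then show "(adj_in sq_adj (- T))\<^sup>*\<^sup>* a b"
      using rtranclp_sq_adj_in_ball[OF aN] rtranclp_adj_in_mono by blast
  qed
  moreover have "\<forall>z\<in>- (\<Union>Cs \<union> T). norm_inf z \<noteq> M" "norm_inf a < M"
    using aN(1) unfolding T_def M_def by auto
  ultimately have "(adj_in sq_adj (- (\<Union>Cs \<union> T) \<inter> {z. norm_inf z < M}))\<^sup>*\<^sup>* a b"
    by (rule rtranclp_sq_adj_inside_sphere)
  moreover have "- (\<Union>Cs \<union> T) \<inter> {z. norm_inf z < M} \<subseteq> - B"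
    unfolding T_def by auto
  ultimately show ?thesis
    using rtranclp_adj_in_mono by blast
qed

lemma small_clusters_unique_infinite_sq_comp:
  assumes small: "small_clusters K"
  shows "\<exists>I. I \<in> components_of sq_adj (- B) \<and> infinite I \<and> - filled \<subseteq> I \<and>
    (\<forall>J. J \<in> components_of sq_adj (- B) \<and> infinite J \<longrightarrow> J = I)"
proof -
  obtain a where a: "a \<notin> filled"
    using exists_unfilled_far[OF small] by blast
  define I where "I = comp_of sq_adj (- B) a"
  have unfilled: "- filled \<subseteq> I"
  proof
    fix x assume "x \<in> - filled"
    then have "(adj_in sq_adj (- B))\<^sup>*\<^sup>* a x"
      using unfilled_sq_connected[OF small a] by simp
    then show "x \<in> I"
      unfolding I_def comp_of_iff .
  qed
  have "infinite I"
  proof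
    assume "finite I"
    then obtain N where N: "\<forall>z\<in>I. norm_inf z \<le> N"
      using finite_imp_norm_inf_bounded by blast
    obtain x where "x \<notin> filled" "norm_inf x > N"
      using exists_unfilled_far[OF small] by blast
    moreover from this have "x \<in> I"
      using unfilled by blast
    ultimately show False
      using N by fastforce
  qed
  moreover have "I \<in> components_of sq_adj (- B)"
    unfolding components_of_def I_def using a not_filled_imp_not_in by blast
  moreover have "\<forall>J. J \<in> components_of sq_adj (- B) \<and> infinite J \<longrightarrow> J = I"
  proof (intro allI impI)
    fix J assume J: "J \<in> components_of sq_adj (- B) \<and> infinite J"
    obtain j where j: "j \<notin> B" "J = comp_of sq_adj (- B) j"
      using J unfolding components_of_def by blast
    then have "j \<notin> filled"
      using infinite_sq_comp_not_filled J by simp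
    then have "comp_of sq_adj (- B) j = I"
      using unfilled unfolding I_def by (intro comp_of_eq[OF symp_sq_adj]) blast
    then show "J = I"
      using j(2) by simp
  qed
  ultimately show ?thesis
    using unfilled by blast
qed

lemma small_clusters_finite_box_comp:
  assumes small: "small_clusters K" and I: "- filled \<subseteq> I"
    and C: "C \<in> components_of box_adj (- I)"
  shows "finite C"
proof (rule ccontr)
  assume "infinite C"
  obtain x where x: "x \<notin> I" "C = comp_of box_adj (- I) x"
    using C unfolding components_of_def by blast
  obtain y where y: "y \<in> C" "dist_inf y x > max (2 * int K) (norm_inf x)"
    using infinite_imp_dist_inf_unbounded[OF \<open>infinite C\<close>] by blast
  have "(adj_in box_adj (- I))\<^sup>*\<^sup>* x y"
    using x(2) y(1) by (simp add: comp_of_iff)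
  moreover have "- I \<subseteq> filled"
    using I by blast
  ultimately obtain c where "c \<in> B" "x \<in> fill (cluster c)" "y \<in> fill (cluster c)"
    using rtranclp_box_adj_in_filled x(1) by blast
  moreover have "2 * int K \<le> dist_inf x y"
    using y(2) dist_inf_commute[of x y] by simp
  ultimately have "3 * dist_inf x y < 2 * norm_inf x"
    by (rule fill_cluster_far_points[OF small])
  then show False
    using y(2) dist_inf_commute[of x y] norm_inf_nonneg[of x] by linarith
qed

lemma small_clusters_components:
  assumes "small_clusters K"
  shows "(\<exists>!I. I \<in> components_of sq_adj (- B) \<and> infinite I) \<and>
    (\<forall>I. I \<in> components_of sq_adj (- B) \<and> infinite I \<longrightarrow>
      (\<forall>C \<in> components_of box_adj (- I). finite C))"
proof -
  obtain I where I: "I \<in> components_of sq_adj (- B)" "infinite I" "- filled \<subseteq> I"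
    and unique: "\<forall>J. J \<in> components_of sq_adj (- B) \<and> infinite J \<longrightarrow> J = I"
    using small_clusters_unique_infinite_sq_comp[OF assms] by blast
  have "\<exists>!I. I \<in> components_of sq_adj (- B) \<and> infinite I"
    using I(1,2) unique by blast
  moreover have "\<forall>J. J \<in> components_of sq_adj (- B) \<and> infinite J \<longrightarrow>
      (\<forall>C \<in> components_of box_adj (- J). finite C)"
  proof (intro allI impI)
    fix J assume "J \<in> components_of sq_adj (- B) \<and> infinite J"
    then have "J = I"
      using unique by blast
    then show "\<forall>C \<in> components_of box_adj (- J). finite C"
      using small_clusters_finite_box_comp[OF assms I(3)] by blast
  qed
  ultimately show ?thesis ..
qed
end


section \<open>Counting king walks\<close>

fun king_walks :: "site \<Rightarrow> nat \<Rightarrow> site list set" where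
  "king_walks z 0 = {[z]}"
| "king_walks z (Suc n) = (\<Union>w\<in>{w. box_adj z w}. (#) z ` king_walks w n)"

lemma box_adj_neighbours_subset:
  "{w. box_adj z w} \<subseteq> ({fst z - 1..fst z + 1} \<times> {snd z - 1..snd z + 1}) - {z}"
  unfolding box_adj_def by (auto simp: abs_le_iff)

lemma finite_box_adj_neighbours: "finite {w. box_adj z w}"
  by (rule finite_subset[OF box_adj_neighbours_subset]) auto

lemma card_box_adj_neighbours: "card {w. box_adj z w} \<le> 8"
proof -
  have "card {w. box_adj z w} \<le> card (({fst z - 1..fst z + 1} \<times> {snd z - 1..snd z + 1}) - {z})"
    by (rule card_mono[OF _ box_adj_neighbours_subset]) auto
  also have "\<dots> = 8"
    by (cases z) (simp add: card_cartesian_product)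
  finally show ?thesis .
qed

lemma finite_king_walks: "finite (king_walks z n)"
  by (induction n arbitrary: z) (auto simp: finite_box_adj_neighbours)

lemma card_king_walks: "card (king_walks z n) \<le> 8 ^ n"
proof (induction n arbitrary: z)
  case 0
  show ?case by simp
next
  case (Suc n)
  let ?N = "{w. box_adj z w}"
  have "card (king_walks z (Suc n)) \<le> (\<Sum>w\<in>?N. card ((#) z ` king_walks w n))"
    unfolding king_walks.simps by (rule card_UN_le[OF finite_box_adj_neighbours])
  also have "\<dots> \<le> (\<Sum>w\<in>?N. 8 ^ n)"
  proof (rule sum_mono)
    fix w
    have "card ((#) z ` king_walks w n) \<le> card (king_walks w n)"
      by (rule card_image_le[OF finite_king_walks])
    then show "card ((#) z ` king_walks w n) \<le> 8 ^ n"
      using Suc[of w] by linarith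
  qed
  also have "\<dots> = card ?N * 8 ^ n"
    by simp
  also have "\<dots> \<le> 8 * 8 ^ n"
    using card_box_adj_neighbours[of z] by simp
  finally show ?case
    by simp
qed

lemma length_king_walks: "xs \<in> king_walks z n \<Longrightarrow> length xs = Suc n"
  by (induction n arbitrary: z xs) auto

lemma king_walksI:
  "length xs = Suc n \<Longrightarrow> hd xs = z \<Longrightarrow> successively box_adj xs \<Longrightarrow> xs \<in> king_walks z n"
proof (induction n arbitrary: z xs)
  case 0
  then show ?case
    by (cases xs) auto
next
  case (Suc n)
  then obtain w ys where xs: "xs = z # w # ys"
    by (cases xs; cases "tl xs") auto
  then have "box_adj z w" "w # ys \<in> king_walks w n"
    using Suc by auto
  then have "xs \<in> (\<Union>w\<in>{w. box_adj z w}. (#) z ` king_walks w n)"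
    using xs by blast
  then show ?case
    by simp
qed

lemma rtranclp_adj_in_distinct_walk:
  assumes "(adj_in adj S)\<^sup>*\<^sup>* v w" "v \<in> S"
  shows "\<exists>xs. hd xs = v \<and> last xs = w \<and> xs \<noteq> [] \<and> distinct xs \<and> successively adj xs \<and> set xs \<subseteq> S"
  using assms(1)
proof (induction rule: rtranclp_induct)
  case base
  show ?case
    using assms(2) by (intro exI[of _ "[v]"]) simp
next
  case (step y z)
  obtain xs where xs: "hd xs = v" "last xs = y" "xs \<noteq> []" "distinct xs" "successively adj xs"
    "set xs \<subseteq> S"
    using step(3) by blast
  have z: "z \<in> S" "adj y z"
    using step(2) unfolding adj_in_def by auto
  show ?case
  proof (cases "z \<in> set xs")
    case True
    then obtain ys zs where split: "xs = ys @ z # zs"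
      by (meson split_list)
    then have "successively adj (ys @ [z])"
      using xs(5) successively_append_iff[of adj "ys @ [z]" zs] by simp
    moreover have "hd (ys @ [z]) = v"
      using xs(1) split by (cases ys) auto
    ultimately show ?thesis
      using xs(4,6) split by (intro exI[of _ "ys @ [z]"]) auto
  next
    case False
    then show ?thesis
      using xs z by (intro exI[of _ "xs @ [z]"]) (auto simp: successively_append_iff)
  qed
qed

lemma dist_inf_walk_ends:
  "successively box_adj xs \<Longrightarrow> xs \<noteq> [] \<Longrightarrow> dist_inf (last xs) (hd xs) \<le> int (length xs) - 1"
proof (induction xs)
  case Nil
  then show ?case by simp
next
  case (Cons x ys)
  show ?case
  proof (cases ys)
    case Nil
    then show ?thesis by (simp add: dist_inf_def)
  next
    case (Cons y zs)
    have b: "box_adj x y" "successively box_adj ys"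
      using Cons.prems(1) Cons by auto
    have "dist_inf (last ys) (hd ys) \<le> int (length ys) - 1"
      using Cons.IH b(2) Cons by simp
    moreover have "dist_inf y x = 1"
      using b(1) box_adj_iff_dist_inf dist_inf_commute by metis
    moreover have "dist_inf (last ys) x \<le> dist_inf (last ys) y + dist_inf y x"
      by (rule dist_inf_triangle)
    ultimately show ?thesis
      using Cons by simp
  qed
qed

lemma card_norm_inf_le: "card {z::site. norm_inf z \<le> int m} = (2 * m + 1) ^ 2"
proof -
  have "{z::site. norm_inf z \<le> int m} = {- int m..int m} \<times> {- int m..int m}"
    unfolding norm_inf_def by (auto simp: abs_le_iff)
  moreover have "nat (2 * int m + 1) = 2 * m + 1"
    by (simp add: nat_int_add)
  ultimately show ?thesis
    by (simp add: card_cartesian_product power2_eq_square)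
qed

lemma square_le_exp: "(8 * n + 1) ^ 2 \<le> 100 * (2::nat) ^ n"
proof (induction n)
  case 0
  show ?case by simp
next
  case (Suc n)
  show ?case
  proof (cases "n < 3")
    case True
    then have "n = 0 \<or> n = 1 \<or> n = 2"
      by auto
    then show ?thesis
      by auto
  next
    case False
    have "3 * (n * 64) \<le> n * (n * 64)"
      using False by (intro mult_right_mono) auto
    then have "79 + n * 112 \<le> n * (n * 64)"
      using False by linarith
    then have "(8 * Suc n + 1) ^ 2 \<le> 2 * (8 * n + 1) ^ 2"
      by (simp add: power2_eq_square algebra_simps)
    also have "\<dots> \<le> 2 * (100 * 2 ^ n)"
      using Suc by simp
    finally show ?thesis
      by simp
  qed
qed


section \<open>Rare random sets have small clusters\<close>

locale rare_random_set = prob_space M for M :: "'a measure" +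
  fixes B :: "'a \<Rightarrow> site set" and \<epsilon> :: real
  assumes measurable_mem: "\<And>z. {\<omega> \<in> space M. z \<in> B \<omega>} \<in> sets M"
    and rare: "rare M B \<epsilon>"
begin

definition walk_event :: "site list \<Rightarrow> 'a set" where
  "walk_event xs = {\<omega> \<in> space M. set xs \<subseteq> B \<omega>}"

definition self_avoiding_walks :: "site \<Rightarrow> nat \<Rightarrow> site list set" where
  "self_avoiding_walks z n = {xs \<in> king_walks z n. distinct xs}"

definition long_walk_event :: "nat \<Rightarrow> 'a set" where
  "long_walk_event n =
     (\<Union>z\<in>{z. norm_inf z \<le> 4 * int n}. \<Union>xs\<in>self_avoiding_walks z n. walk_event xs)"

lemma eps_nonneg: "0 \<le> \<epsilon>"
  using rare unfolding rare_def by simp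

lemma walk_event_sets: "walk_event xs \<in> sets M"
proof (induction xs)
  case Nil
  have "walk_event [] = space M"
    unfolding walk_event_def by auto
  then show ?case
    by simp
next
  case (Cons x xs)
  have "walk_event (x # xs) = {\<omega> \<in> space M. x \<in> B \<omega>} \<inter> walk_event xs"
    unfolding walk_event_def by auto
  then show ?case
    using measurable_mem Cons by auto
qed

lemma finite_self_avoiding_walks: "finite (self_avoiding_walks z n)"
  and card_self_avoiding_walks: "card (self_avoiding_walks z n) \<le> 8 ^ n"
proof -
  have "self_avoiding_walks z n \<subseteq> king_walks z n"
    unfolding self_avoiding_walks_def by auto
  then show "finite (self_avoiding_walks z n)" "card (self_avoiding_walks z n) \<le> 8 ^ n"
    using finite_king_walks[of z n] card_king_walks[of z n]
    by (auto intro: finite_subset card_mono order_trans)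
qed

lemma long_walk_event_sets: "long_walk_event n \<in> sets M"
  unfolding long_walk_event_def
  using finite_norm_inf_le finite_self_avoiding_walks walk_event_sets by (intro sets.finite_UN) auto

lemma measure_walk_event:
  assumes "xs \<in> self_avoiding_walks z n"
  shows "measure M (walk_event xs) \<le> \<epsilon> ^ Suc n"
proof -
  have "measure M (walk_event xs) \<le> \<epsilon> ^ card (set xs)"
    using rare unfolding rare_def walk_event_def by blast
  moreover have "card (set xs) = length xs"
    using assms unfolding self_avoiding_walks_def by (simp add: distinct_card)
  moreover have "length xs = Suc n"
    using assms length_king_walks unfolding self_avoiding_walks_def by blast
  ultimately show ?thesis
    by simp
qed

lemma measure_walks_from: "measure M (\<Union>xs\<in>self_avoiding_walks z n. walk_event xs) \<le> 8 ^ n * \<epsilon> ^ Suc n"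
proof -
  have "measure M (\<Union>xs\<in>self_avoiding_walks z n. walk_event xs)
      \<le> (\<Sum>xs\<in>self_avoiding_walks z n. measure M (walk_event xs))"
    by (rule measure_UNION_le[OF finite_self_avoiding_walks]) (rule walk_event_sets)
  also have "\<dots> \<le> (\<Sum>xs\<in>self_avoiding_walks z n. \<epsilon> ^ Suc n)"
    by (rule sum_mono) (rule measure_walk_event)
  also have "\<dots> = real (card (self_avoiding_walks z n)) * \<epsilon> ^ Suc n"
    by simp
  also have "\<dots> \<le> 8 ^ n * \<epsilon> ^ Suc n"
  proof (rule mult_right_mono)
    have "real (card (self_avoiding_walks z n)) \<le> real (8 ^ n)"
      using card_self_avoiding_walks[of z n] by (simp only: of_nat_le_iff)
    then show "real (card (self_avoiding_walks z n)) \<le> 8 ^ n"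
      by simp
    show "0 \<le> \<epsilon> ^ Suc n"
      using eps_nonneg by simp
  qed
  finally show ?thesis .
qed

lemma measure_long_walk_event: "measure M (long_walk_event n) \<le> 100 * \<epsilon> * (16 * \<epsilon>) ^ n"
proof -
  have "measure M (long_walk_event n)
      \<le> (\<Sum>z\<in>{z. norm_inf z \<le> 4 * int n}. measure M (\<Union>xs\<in>self_avoiding_walks z n. walk_event xs))"
    unfolding long_walk_event_def using finite_self_avoiding_walks walk_event_sets
    by (intro measure_UNION_le[OF finite_norm_inf_le] sets.finite_UN) auto
  also have "\<dots> \<le> (\<Sum>z\<in>{z. norm_inf z \<le> 4 * int n}. 8 ^ n * \<epsilon> ^ Suc n)"
    by (rule sum_mono) (rule measure_walks_from)
  also have "\<dots> = real ((8 * n + 1) ^ 2) * (8 ^ n * \<epsilon> ^ Suc n)"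
    using card_norm_inf_le[of "4 * n"] by simp
  also have "\<dots> \<le> real (100 * 2 ^ n) * (8 ^ n * \<epsilon> ^ Suc n)"
  proof (rule mult_right_mono)
    show "real ((8 * n + 1) ^ 2) \<le> real (100 * 2 ^ n)"
      using square_le_exp[of n] by (simp only: of_nat_le_iff)
    show "0 \<le> 8 ^ n * \<epsilon> ^ Suc n"
      using eps_nonneg by simp
  qed
  also have "\<dots> = 100 * \<epsilon> * (16 * \<epsilon>) ^ n"
  proof -
    have "(16 * \<epsilon>) ^ n = (2 * 8 * \<epsilon>) ^ n"
      by simp
    also have "\<dots> = 2 ^ n * 8 ^ n * \<epsilon> ^ n"
      by (simp only: power_mult_distrib)
    finally have e: "(16 * \<epsilon>) ^ n = 2 ^ n * 8 ^ n * \<epsilon> ^ n" .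
    show ?thesis
      unfolding e by (simp add: algebra_simps)
  qed
  finally show ?thesis .
qed

text \<open>A cluster reaching distance \<open>n\<close> from a site in the box of radius \<open>4 n\<close> contains a
  self-avoiding king walk of length \<open>n\<close> from that site.\<close>

lemma small_clusters_if_no_long_walk:
  assumes \<omega>: "\<omega> \<in> space M" and K: "\<forall>n\<ge>K. \<omega> \<notin> long_walk_event n"
  shows "box_clusters.small_clusters (B \<omega>) K"
  unfolding box_clusters.small_clusters_def
proof (intro allI impI ballI)
  fix n v w
  assume n: "K \<le> n" and v: "v \<in> B \<omega>" "norm_inf v \<le> 4 * int n"
    and w: "w \<in> box_clusters.cluster (B \<omega>) v"
  show "dist_inf w v < int n"
  proof (rule ccontr)
    assume far: "\<not> dist_inf w v < int n"
    have "(adj_in box_adj (B \<omega>))\<^sup>*\<^sup>* v w"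
      using w unfolding box_clusters.cluster_def comp_of_iff .
    then obtain xs where xs: "hd xs = v" "last xs = w" "xs \<noteq> []" "distinct xs"
      "successively box_adj xs" "set xs \<subseteq> B \<omega>"
      using rtranclp_adj_in_distinct_walk v(1) by blast
    have "int n \<le> int (length xs) - 1"
      using dist_inf_walk_ends[OF xs(5,3)] xs(1,2) far by simp
    then have "Suc n \<le> length xs"
      by linarith
    moreover have "successively box_adj (take (Suc n) xs)"
      using xs(5) successively_append_iff[of box_adj "take (Suc n) xs" "drop (Suc n) xs"] by simp
    ultimately have "take (Suc n) xs \<in> king_walks v n"
      using xs(1,3) by (intro king_walksI) auto
    then have "take (Suc n) xs \<in> self_avoiding_walks v n"
      using xs(4) unfolding self_avoiding_walks_def by simp
    moreover have "set (take (Suc n) xs) \<subseteq> B \<omega>"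
      using set_take_subset xs(6) by (rule order_trans)
    then have "\<omega> \<in> walk_event (take (Suc n) xs)"
      unfolding walk_event_def using \<omega> by simp
    ultimately have "\<omega> \<in> long_walk_event n"
      unfolding long_walk_event_def using v(2) by blast
    then show False
      using K n by blast
  qed
qed

lemma AE_small_clusters:
  assumes small: "\<epsilon> < 1/16"
  shows "AE \<omega> in M. \<exists>K. box_clusters.small_clusters (B \<omega>) K"
proof -
  have "summable (\<lambda>n. measure M (long_walk_event n))"
  proof (rule summable_comparison_test')
    have "norm (16 * \<epsilon>) < 1"
      using eps_nonneg small by simp
    then show "summable (\<lambda>n. 100 * \<epsilon> * (16 * \<epsilon>) ^ n)"
      by (intro summable_mult summable_geometric)
    show "norm (measure M (long_walk_event n)) \<le> 100 * \<epsilon> * (16 * \<epsilon>) ^ n" for n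
      using measure_long_walk_event by simp
  qed
  then have ae: "AE \<omega> in M. eventually (\<lambda>n. \<omega> \<in> space M - long_walk_event n) sequentially"
  proof (rule borel_cantelli_AE1[rotated 2])
    show "long_walk_event n \<in> sets M" for n
      by (rule long_walk_event_sets)
    show "emeasure M (long_walk_event n) < \<infinity>" for n
      using emeasure_finite by (simp add: less_top[symmetric])
  qed
  show ?thesis
  proof (rule AE_mp[OF ae], rule AE_I2, intro impI)
    fix \<omega> assume \<omega>: "\<omega> \<in> space M"
      and "eventually (\<lambda>n. \<omega> \<in> space M - long_walk_event n) sequentially"
    then obtain K where "\<forall>n\<ge>K. \<omega> \<notin> long_walk_event n"
      unfolding eventually_sequentially by blast
    then show "\<exists>K. box_clusters.small_clusters (B \<omega>) K"
      using small_clusters_if_no_long_walk[OF \<omega>] by blast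
  qed
qed

end

theorem lemma6p2:
  fixes M :: "'a measure" and B :: "'a \<Rightarrow> site set" and \<epsilon> :: real
  assumes "prob_space M"
    and "\<And>z. {\<omega> \<in> space M. z \<in> B \<omega>} \<in> sets M"
    and "\<epsilon> < 1/21"
    and "rare M B \<epsilon>"
  shows "AE \<omega> in M.
           (\<exists>!I. I \<in> components_of sq_adj (- B \<omega>) \<and> infinite I) \<and>
           (\<forall>I. I \<in> components_of sq_adj (- B \<omega>) \<and> infinite I \<longrightarrow>
                (\<forall>C \<in> components_of box_adj (- I). finite C))"
proof -
  interpret rare_random_set M B \<epsilon>
    unfolding rare_random_set_def rare_random_set_axioms_def using assms by auto
  have small: "AE \<omega> in M. \<exists>K. box_clusters.small_clusters (B \<omega>) K"
    using assms(3) by (intro AE_small_clusters) simp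
  show ?thesis
  proof (rule AE_mp[OF small], rule AE_I2, intro impI)
    fix \<omega> assume "\<exists>K. box_clusters.small_clusters (B \<omega>) K"
    then obtain K where "box_clusters.small_clusters (B \<omega>) K"
      by blast
    then show "(\<exists>!I. I \<in> components_of sq_adj (- B \<omega>) \<and> infinite I) \<and>
           (\<forall>I. I \<in> components_of sq_adj (- B \<omega>) \<and> infinite I \<longrightarrow>
                (\<forall>C \<in> components_of box_adj (- I). finite C))"
      by (rule box_clusters.small_clusters_components)
  qed
qed

end
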